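(* In the setting of the context, suppose the algorithm described there terminates after $N$ steps, i.e. $CB^{(N)}=0$. Then the returned matrix $B$ (the non-zero columns of $B^{(N)}$) represents a partition of unity: every row of $B$ sums to $1$.
   Context: Multi-patch setting: $\Omega\subset\mathbb{R}^2$ is the union of closures of $K$ pairwise disjoint patches $\Omega_k=G_k((0,1)^2)$; on each patch there is a local basis $\Phi^{(k)}=(\phi_i^{(k)})_{i=1}^{n^{(k)}}$ obtained by mapping tensor-product B-splines (degree $p$, open knot vectors) via $G_k$. Any two patches sharing an edge $\Gamma_{k,\ell}=\partial\Omega_k\cap\partial\Omega_\ell$ (of positive length) have nested trace spaces; the closures of two patches intersect in the empty set, a vertex of at least one of them, or an edge of at least one of them; and any two patches meeting at a T-junction share an edge. Let $n^{(pw)}=\sum_kn^{(k)}$ and index the concatenated coefficient vector $\underline u_h=(\underline u_h^{(1)},\ldots,\underline u_h^{(K)})\in\mathbb{R}^{n^{(pw)}}$. Constraint matrix $C$: for every pair of patches $\Omega_k,\Omega_\ell$ sharing an edge $\Gamma$ with $V_h^{(k)}|_\Gamma\subseteq V_h^{(\ell)}|_\Gamma$, and every $i$ with $\phi_i^{(k)}|_\Gamma\not\equiv0$, write $\phi_i^{(k)}=\sum_jE^{(k,\ell)}_{i,j}\phi_j^{(\ell)}$ on $\Gamma$ with nonnegative coefficients with row sums $1$ (knot insertion); then $C$ has a row representing $u_i^{(k)}-\sum_jE^{(k,\ell)}_{i,j}u_j^{(\ell)}=0$. For a matrix $D$ and row $m$ define $\mathcal F_m(D)=\{n: D_{m,n}\ne0,\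 D_{m,n}D_{m,j}\le0\ \forall j\ne n\}$. Algorithm: $B^{(0)}=I$; for $\nu=1,2,\ldots$ until $CB^{(\nu)}=0$: choose $m_\nu,n_\nu$ with $n_\nu\in\mathcal F_{m_\nu}(CB^{(\nu-1)})$, set $R^{(\nu)}=I-\frac{1}{e_{m_\nu}^\top CB^{(\nu-1)}e_{n_\nu}}e_{n_\nu}e_{m_\nu}^\top CB^{(\nu-1)}$, $B^{(\nu)}=B^{(\nu-1)}R^{(\nu)}$. Return $B$ = the non-zero columns of $B^{(N)}$, $N$ the first index with $CB^{(N)}=0$. *)

theory Defs
  imports "Jordan_Normal_Form.Matrix"
begin

text \<open>Multi-patch indexing: K patches, patch k has nsz k basis functions.
  The global (concatenated) index of local function i of patch k is offset nsz k + i.\<close>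

definition offset :: "(nat \<Rightarrow> nat) \<Rightarrow> nat \<Rightarrow> nat" where
  "offset nsz k = (\<Sum>k'<k. nsz k')"

definition npw :: "nat \<Rightarrow> (nat \<Rightarrow> nat) \<Rightarrow> nat" where
  "npw K nsz = (\<Sum>k<K. nsz k)"

text \<open>A constraint row: u_i^(k) - sum_j E_j u_j^(l) = 0, with k, l distinct patches,
  E nonnegative with row sum 1 (knot insertion coefficients).\<close>

definition constraint_row ::
  "nat \<Rightarrow> (nat \<Rightarrow> nat) \<Rightarrow> nat \<Rightarrow> nat \<Rightarrow> nat \<Rightarrow> (nat \<Rightarrow> real) \<Rightarrow> real vec" where
  "constraint_row K nsz k l i E =
     vec (npw K nsz) (\<lambda>g. (if g = offset nsz k + i then 1 else 0)
        - (\<Sum>j<nsz l. if g = offset nsz l + j then E j else 0))"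

definition is_constraint_matrix :: "nat \<Rightarrow> (nat \<Rightarrow> nat) \<Rightarrow> real mat \<Rightarrow> bool" where
  "is_constraint_matrix K nsz C \<longleftrightarrow>
     dim_col C = npw K nsz \<and>
     (\<forall>r < dim_row C. \<exists>k l i E. k < K \<and> l < K \<and> k \<noteq> l \<and> i < nsz k \<and>
        (\<forall>j. 0 \<le> E j) \<and> (\<Sum>j<nsz l. E j) = 1 \<and>
        row C r = constraint_row K nsz k l i E)"

definition Fset :: "real mat \<Rightarrow> nat \<Rightarrow> nat set" where
  "Fset D m = {n. n < dim_col D \<and> D $$ (m, n) \<noteq> 0 \<and>
                  (\<forall>j < dim_col D. j \<noteq> n \<longrightarrow> D $$ (m, n) * D $$ (m, j) \<le> 0)}"

text \<open>R = I - (1 / (e_m^T D e_n)) e_n e_m^T D, where D = C B^(nu-1).\<close>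

definition Rstep :: "real mat \<Rightarrow> nat \<Rightarrow> nat \<Rightarrow> real mat" where
  "Rstep D m n = 1\<^sub>m (dim_col D) -
     mat (dim_col D) (dim_col D) (\<lambda>(a, b). if a = n then D $$ (m, b) / D $$ (m, n) else 0)"

text \<open>B^(nu); piv nu = (m_nu, n_nu) is the pivot chosen in step nu (nu \<ge> 1).\<close>

fun Bseq :: "real mat \<Rightarrow> (nat \<Rightarrow> nat \<times> nat) \<Rightarrow> nat \<Rightarrow> real mat" where
  "Bseq C piv 0 = 1\<^sub>m (dim_col C)"
| "Bseq C piv (Suc v) =
     Bseq C piv v * Rstep (C * Bseq C piv v) (fst (piv (Suc v))) (snd (piv (Suc v)))"

definition nonzero_cols :: "'a::zero mat \<Rightarrow> nat set" where
  "nonzero_cols M = {j. j < dim_col M \<and> col M j \<noteq> 0\<^sub>v (dim_row M)}"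

definition keep_nonzero_cols :: "'a::zero mat \<Rightarrow> 'a mat" where
  "keep_nonzero_cols M =
     mat (dim_row M) (card (nonzero_cols M))
         (\<lambda>(i, c). M $$ (i, sorted_list_of_set (nonzero_cols M) ! c))"

end

theory Submission
  imports Defs
begin

text \<open>Write 1 for the all-ones vector, so that "every row of B sums to 1" reads B 1 = 1.
  Every constraint row sums to zero, because the knot insertion coefficients sum to one;
  thus C 1 = 0. If B^(nu-1) 1 = 1, then D = C B^(nu-1) satisfies D 1 = 0, so the step
  R = I - e_n e_m^T D / D_mn gives R 1 = 1 - e_n (e_m^T D 1) / D_mn = 1, and B^(nu) 1 = 1.
  Deleting zero columns changes no row sum.\<close>

definition ones_vec :: "nat \<Rightarrow> 'a::one vec" where
  "ones_vec n = vec n (\<lambda>_. 1)"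

lemma ones_vec_carrier [simp]: "ones_vec n \<in> carrier_vec n"
  and dim_ones_vec [simp]: "dim_vec (ones_vec n) = n"
  and index_ones_vec [simp]: "i < n \<Longrightarrow> ones_vec n $ i = 1"
  by (simp_all add: ones_vec_def)

lemma mult_ones_vec_index:
  fixes A :: "'a::semiring_1 mat"
  assumes "i < dim_row A"
  shows "(A *\<^sub>v ones_vec (dim_col A)) $ i = (\<Sum>j<dim_col A. A $$ (i, j))"
  using assms
  by (simp add: scalar_prod_def atLeast0LessThan)

lemma offset_add_less_npw:
  assumes "l < K" "j < nsz l"
  shows "offset nsz l + j < npw K nsz"
proof -
  have "offset nsz l + j < (\<Sum>k<Suc l. nsz k)" using assms by (simp add: offset_def)
  also have "\<dots> \<le> (\<Sum>k<K. nsz k)" using assms by (intro sum_mono2) auto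
  finally show ?thesis by (simp add: npw_def)
qed

lemma constraint_row_sum:
  assumes "k < K" "l < K" "i < nsz k"
  shows "constraint_row K nsz k l i E \<bullet> ones_vec (npw K nsz) = 1 - (\<Sum>j<nsz l. E j)"
proof -
  let ?n = "npw K nsz"
  have "constraint_row K nsz k l i E \<bullet> ones_vec ?n
      = (\<Sum>g<?n. if g = offset nsz k + i then 1 else 0)
        - (\<Sum>g<?n. \<Sum>j<nsz l. if g = offset nsz l + j then E j else 0)"
    by (simp add: constraint_row_def scalar_prod_def atLeast0LessThan sum_subtractf)
  also have "\<dots> = (\<Sum>g<?n. if g = offset nsz k + i then 1 else 0)
        - (\<Sum>j<nsz l. \<Sum>g<?n. if g = offset nsz l + j then E j else 0)"
    by (subst sum.swap) (rule refl)
  also have "\<dots> = 1 - (\<Sum>j<nsz l. E j)"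
    using assms offset_add_less_npw[of k K i nsz] offset_add_less_npw[of l K _ nsz]
    by simp
  finally show ?thesis .
qed

lemma constraint_matrix_mult_ones:
  assumes "is_constraint_matrix K nsz C"
  shows "C *\<^sub>v ones_vec (dim_col C) = 0\<^sub>v (dim_row C)"
proof (rule eq_vecI)
  fix r assume r: "r < dim_vec (0\<^sub>v (dim_row C) :: real vec)"
  then obtain k l i E where "k < K" "l < K" "i < nsz k" "(\<Sum>j<nsz l. E j) = 1"
    and "row C r = constraint_row K nsz k l i E"
    using assms unfolding is_constraint_matrix_def by auto
  moreover have "dim_col C = npw K nsz"
    using assms by (simp add: is_constraint_matrix_def)
  ultimately show "(C *\<^sub>v ones_vec (dim_col C)) $ r = 0\<^sub>v (dim_row C) $ r"
    using r by (simp add: constraint_row_sum)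
qed simp

lemma Rstep_mult_ones:
  assumes D: "D \<in> carrier_mat nr nc" and m: "m < nr"
    and row_sum: "(D *\<^sub>v ones_vec nc) $ m = 0"
  shows "Rstep D m n *\<^sub>v ones_vec nc = ones_vec nc"
proof (rule eq_vecI)
  fix a assume "a < dim_vec (ones_vec nc :: real vec)"
  then have a: "a < nc" by simp
  have "(Rstep D m n *\<^sub>v ones_vec nc) $ a
      = (\<Sum>b<nc. (if a = b then 1 else 0) - (if a = n then D $$ (m, b) / D $$ (m, n) else 0))"
    using D a by (simp add: Rstep_def scalar_prod_def atLeast0LessThan)
  also have "\<dots> = 1 - (if a = n then (\<Sum>b<nc. D $$ (m, b)) / D $$ (m, n) else 0)"
    using a by (simp add: sum_subtractf sum_divide_distrib)
  also have "\<dots> = 1"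
    using row_sum mult_ones_vec_index[of m D] D m by simp
  finally show "(Rstep D m n *\<^sub>v ones_vec nc) $ a = ones_vec nc $ a" using a by simp
qed (use D in \<open>simp add: Rstep_def\<close>)

lemma Bseq_carrier: "Bseq C piv v \<in> carrier_mat (dim_col C) (dim_col C)"
  by (induction v) (auto simp: Rstep_def)

lemma Bseq_mult_ones:
  assumes kernel: "C *\<^sub>v ones_vec (dim_col C) = 0\<^sub>v (dim_row C)"
    and pivot_rows: "\<And>v. 1 \<le> v \<Longrightarrow> v \<le> N \<Longrightarrow> fst (piv v) < dim_row C"
    and "v \<le> N"
  shows "Bseq C piv v *\<^sub>v ones_vec (dim_col C) = ones_vec (dim_col C)"
  using \<open>v \<le> N\<close>
proof (induction v)
  case 0
  show ?case by simp
next
  case (Suc v)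
  let ?n = "dim_col C" and ?B = "Bseq C piv v" and ?m = "fst (piv (Suc v))"
  have B: "?B \<in> carrier_mat ?n ?n" by (rule Bseq_carrier)
  have IH: "?B *\<^sub>v ones_vec ?n = ones_vec ?n" using Suc by simp
  have "C * ?B *\<^sub>v ones_vec ?n = C *\<^sub>v (?B *\<^sub>v ones_vec ?n)"
    using B by (intro assoc_mult_mat_vec[of C _ ?n]) auto
  then have "C * ?B *\<^sub>v ones_vec ?n = 0\<^sub>v (dim_row C)"
    using IH kernel by simp
  then have R: "Rstep (C * ?B) ?m (snd (piv (Suc v))) *\<^sub>v ones_vec ?n = ones_vec ?n"
    using B pivot_rows[of "Suc v"] Suc.prems
    by (intro Rstep_mult_ones[of _ "dim_row C" ?n]) auto
  have "Rstep (C * ?B) ?m (snd (piv (Suc v))) \<in> carrier_mat ?n ?n"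
    using B unfolding Rstep_def by (intro minus_carrier_mat) auto
  then have "?B * Rstep (C * ?B) ?m (snd (piv (Suc v))) *\<^sub>v ones_vec ?n
      = ?B *\<^sub>v (Rstep (C * ?B) ?m (snd (piv (Suc v))) *\<^sub>v ones_vec ?n)"
    using B by (intro assoc_mult_mat_vec) auto
  then show ?case
    using R IH by simp
qed

lemma sum_nonzero_cols:
  assumes "i < dim_row M"
  shows "(\<Sum>j\<in>nonzero_cols M. M $$ (i, j)) = (\<Sum>j<dim_col M. M $$ (i, j))"
proof (rule sum.mono_neutral_left)
  show "\<forall>j\<in>{..<dim_col M} - nonzero_cols M. M $$ (i, j) = 0"
  proof
    fix j assume "j \<in> {..<dim_col M} - nonzero_cols M"
    then have "j < dim_col M" "col M j = 0\<^sub>v (dim_row M)" by (auto simp: nonzero_cols_def)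
    then show "M $$ (i, j) = 0" using assms by (metis col_def index_vec index_zero_vec(1))
  qed
qed (auto simp: nonzero_cols_def)

lemma keep_nonzero_cols_mult_ones:
  fixes M :: "'a::semiring_1 mat"
  shows "keep_nonzero_cols M *\<^sub>v ones_vec (dim_col (keep_nonzero_cols M))
    = M *\<^sub>v ones_vec (dim_col M)"
proof (rule eq_vecI)
  fix i assume "i < dim_vec (M *\<^sub>v ones_vec (dim_col M))"
  then have i: "i < dim_row M" by simp
  let ?S = "nonzero_cols M"
  let ?L = "sorted_list_of_set ?S"
  have fin: "finite ?S" by (simp add: nonzero_cols_def)
  have "(keep_nonzero_cols M *\<^sub>v ones_vec (dim_col (keep_nonzero_cols M))) $ i
      = (\<Sum>c<length ?L. M $$ (i, ?L ! c))"
    using i fin mult_ones_vec_index[of i "keep_nonzero_cols M"]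
    by (simp add: keep_nonzero_cols_def del: index_mult_mat_vec)
  also have "\<dots> = (\<Sum>j\<in>?S. M $$ (i, j))"
    using sum_list_distinct_conv_sum_set[of ?L "\<lambda>j. M $$ (i, j)"] fin
    by (simp add: sum_list_sum_nth atLeast0LessThan)
  also have "\<dots> = (M *\<^sub>v ones_vec (dim_col M)) $ i"
    using sum_nonzero_cols[OF i] mult_ones_vec_index[OF i] by (simp del: index_mult_mat_vec)
  finally show "(keep_nonzero_cols M *\<^sub>v ones_vec (dim_col (keep_nonzero_cols M))) $ i
      = (M *\<^sub>v ones_vec (dim_col M)) $ i" .
qed (simp add: keep_nonzero_cols_def)

theorem mainTheorem6:
  fixes K :: nat and nsz :: "nat \<Rightarrow> nat" and C :: "real mat"
    and piv :: "nat \<Rightarrow> nat \<times> nat" and N :: nat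
  assumes constr: "is_constraint_matrix K nsz C"
    and pivots: "\<And>v. 1 \<le> v \<Longrightarrow> v \<le> N \<Longrightarrow>
                   fst (piv v) < dim_row C \<and>
                   snd (piv v) \<in> Fset (C * Bseq C piv (v - 1)) (fst (piv v))"
    and not_done: "\<And>v. v < N \<Longrightarrow> C * Bseq C piv v \<noteq> 0\<^sub>m (dim_row C) (npw K nsz)"
    and terminated: "C * Bseq C piv N = 0\<^sub>m (dim_row C) (npw K nsz)"
  shows "\<forall>i < dim_row (keep_nonzero_cols (Bseq C piv N)).
           (\<Sum>c < dim_col (keep_nonzero_cols (Bseq C piv N)).
              keep_nonzero_cols (Bseq C piv N) $$ (i, c)) = 1"
proof (intro allI impI)
  let ?B = "keep_nonzero_cols (Bseq C piv N)"
  fix i assume i: "i < dim_row ?B"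
  then have i_less: "i < dim_col C"
    using Bseq_carrier[of C piv N] by (simp add: keep_nonzero_cols_def)
  have "Bseq C piv N *\<^sub>v ones_vec (dim_col C) = ones_vec (dim_col C)"
    by (rule Bseq_mult_ones[OF constraint_matrix_mult_ones[OF constr], where N = N])
      (simp_all add: pivots)
  then have "?B *\<^sub>v ones_vec (dim_col ?B) = ones_vec (dim_col C)"
    using Bseq_carrier[of C piv N] by (simp add: keep_nonzero_cols_mult_ones)
  then show "(\<Sum>c<dim_col ?B. ?B $$ (i, c)) = 1"
    using mult_ones_vec_index[OF i] i_less by simp
qed

end
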